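(* Let $(X_n)$ be i.i.d. in $S$ satisfying $\mathbb P\bigl(\bigcup_{n\ge1}[X_n\cdots X_1\in S^\circ]\bigr)>0$, and assume there exist $0<\alpha\le2$, a slowly varying function $L$ (unbounded if $\alpha=2$) and constants $c_+,c_-\ge0$ with $c_++c_->0$ such that (i) $\lim_{u\to+\infty}\frac{u^\alpha}{L(u)}\mathbb P[N_1>e^u]=c_+$ and $\lim_{u\to+\infty}\frac{u^\alpha}{L(u)}\mathbb P[N_1\le e^{-u}]=c_-$; (ii) $\limsup_{u\to+\infty}\frac{u^\alpha}{L(u)}\mathbb P[V_1\le e^{-u}]<+\infty$. Let $F(u)=(\mu\otimes\nu)\{(g,x)\in S\times\overline B:\xi(g,x)\le u\}$, $u\in\mathbb R$. Then $$\lim_{u\to+\infty}\frac{u^\alpha}{L(u)}\bigl(1-F(u)\bigr)=c_+\qquad\text{and}\qquad\lim_{u\to+\infty}\frac{u^\alpha}{L(u)}F(-u)=c_-.$$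
   Context: $S$ is the semigroup of real $q\times q$ matrices with nonnegative entries such that every row and every column contains a strictly positive entry; $S^\circ$ the subset with all entries strictly positive. $(e_i)$ is the canonical basis of $\mathbb R^q$, $\|x\|=\sum_i|x_i|$, $\overline B=\{x\in\mathbb R^q:x_i\ge0,\ \|x\|=1\}$, $g\cdot x=gx/\|gx\|$, $\xi(g,x)=\ln\|gx\|$. $\mu$ is the law of $Y_1=X_1^*$ and $\nu$ is the unique $\mu$-invariant probability measure on $\overline B$ (i.e. $\int\int f(g\cdot x)d\mu(g)d\nu(x)=\int fd\nu$ for all bounded continuous $f$). $N_1=\sum_{i,j}\langle e_i,X_1e_j\rangle$ and $V_1=\min_i\sum_j\langle e_i,X_1e_j\rangle$. *)

theory Defs
  imports "HOL-Probability.Probability"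
begin

definition S_set :: "(real^'q^'q) set" where
  "S_set = {g. (\<forall>i j. g $ i $ j \<ge> 0) \<and> (\<forall>i. \<exists>j. g $ i $ j > 0) \<and> (\<forall>j. \<exists>i. g $ i $ j > 0)}"

definition S_pos :: "(real^'q^'q) set" where
  "S_pos = {g. \<forall>i j. g $ i $ j > 0}"

definition l1norm :: "real^'q \<Rightarrow> real" where
  "l1norm x = (\<Sum>i\<in>UNIV. \<bar>x $ i\<bar>)"

definition Bbar :: "(real^'q) set" where
  "Bbar = {x. (\<forall>i. x $ i \<ge> 0) \<and> l1norm x = 1}"

definition proj_act :: "real^'q^'q \<Rightarrow> real^'q \<Rightarrow> real^'q" where
  "proj_act g x = (1 / l1norm (g *v x)) *\<^sub>R (g *v x)"

definition xi :: "real^'q^'q \<Rightarrow> real^'q \<Rightarrow> real" where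
  "xi g x = ln (l1norm (g *v x))"

definition Nsum :: "real^'q^'q \<Rightarrow> real" where
  "Nsum g = (\<Sum>i\<in>UNIV. \<Sum>j\<in>UNIV. g $ i $ j)"

definition Vmin :: "real^'q^'q \<Rightarrow> real" where
  "Vmin g = Min (range (\<lambda>i. \<Sum>j\<in>UNIV. g $ i $ j))"

text \<open>Left product X_{n-1} ... X_0 (random matrices indexed from 0).\<close>
fun lprod :: "(nat \<Rightarrow> real^'q^'q) \<Rightarrow> nat \<Rightarrow> real^'q^'q" where
  "lprod Y 0 = mat 1"
| "lprod Y (Suc n) = Y n ** lprod Y n"

definition slowly_varying :: "(real \<Rightarrow> real) \<Rightarrow> bool" where
  "slowly_varying L \<longleftrightarrow> L \<in> borel_measurable borel \<and> (\<forall>\<^sub>F u in at_top. L u > 0) \<and>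
     (\<forall>t>0. ((\<lambda>u. L (t * u) / L u) \<longlongrightarrow> 1) at_top)"

definition mu_invariant :: "(real^'q^'q) measure \<Rightarrow> (real^'q) measure \<Rightarrow> bool" where
  "mu_invariant \<mu> \<nu> \<longleftrightarrow> (\<forall>f::real^'q \<Rightarrow> real. continuous_on UNIV f \<longrightarrow> bounded (range f) \<longrightarrow>
     (\<integral>x. (\<integral>g. f (proj_act g x) \<partial>\<mu>) \<partial>\<nu>) = (\<integral>x. f x \<partial>\<nu>))"

end

theory Submission
  imports Defs
begin

(* Let mu be the law of X_1^T and F the distribution function of the cocycle
   xi(g,x) = ln |g x| under mu (x) nu.  For g in S and x in the simplex Bbar, |g x| is the
   combination of the column sums of g with weights x_j, hence

       V(g^T) <= |g x| <= N(g),    and    |g x| >= e N(g)  if all x_j >= e.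

   These give two-sided bounds for 1 - F(u) and F(-u) in terms of the tails of N and V and of
   nu{x. all x_j >= e}.  A regularly varying tail does not see a bounded shift of its argument,
   so the bounds yield the limits as soon as nu{x. all x_j >= e} -> 1 as e -> 0, i.e. as soon
   as nu is carried by the vectors of full support.  This is the core of the argument: the
   proper supports charged by nu generate a down-closed family D; the set of vectors with
   support in D is closed, so invariance applies to it and shows that mu-almost every matrix
   maps D into itself.  Then no product X_n ... X_1 is ever strictly positive, contradicting
   the positivity hypothesis. *)

subsection \<open>Measurability\<close>

lemma continuous_on_matrix_vector_mult:
  "continuous_on UNIV (\<lambda>p::(real^'q^'q) \<times> (real^'q). fst p *v snd p)"
  unfolding matrix_vector_mult_def by (intro continuous_intros)

lemma borel_measurable_matrix_vector_mult[measurable (raw)]: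
  fixes f :: "'a \<Rightarrow> real^'q^'q" and h :: "'a \<Rightarrow> real^'q"
  assumes [measurable]: "f \<in> borel_measurable M" "h \<in> borel_measurable M"
  shows "(\<lambda>x. f x *v h x) \<in> borel_measurable M"
proof -
  have "(\<lambda>p::(real^'q^'q) \<times> (real^'q). fst p *v snd p) \<in> borel_measurable (borel \<Otimes>\<^sub>M borel)"
    using borel_measurable_continuous_onI[OF continuous_on_matrix_vector_mult] by (simp add: borel_prod)
  from measurable_compose[OF _ this, of "\<lambda>x. (f x, h x)" M] show ?thesis by simp
qed

lemma borel_measurable_l1norm[measurable (raw)]:
  fixes h :: "'a \<Rightarrow> real^'q"
  assumes [measurable]: "h \<in> borel_measurable M"
  shows "(\<lambda>x. l1norm (h x)) \<in> borel_measurable M"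
proof -
  have "continuous_on UNIV (l1norm :: real^'q \<Rightarrow> real)"
    unfolding l1norm_def by (intro continuous_intros)
  from measurable_compose[OF assms borel_measurable_continuous_onI[OF this]] show ?thesis by simp
qed

lemma borel_measurable_vec_nth[measurable (raw)]:
  fixes h :: "'a \<Rightarrow> 'b::real_normed_vector^'n"
  assumes [measurable]: "h \<in> borel_measurable M"
  shows "(\<lambda>x. h x $ i) \<in> borel_measurable M"
  using measurable_compose[OF assms borel_measurable_continuous_onI[OF
        continuous_on_component[OF continuous_on_id]]] by simp

lemma borel_measurable_transpose[measurable (raw)]:
  fixes f :: "'a \<Rightarrow> real^'q^'q"
  assumes [measurable]: "f \<in> borel_measurable M"
  shows "(\<lambda>x. transpose (f x)) \<in> borel_measurable M"
proof -
  have "continuous_on UNIV (transpose :: real^'q^'q \<Rightarrow> real^'q^'q)"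
    unfolding transpose_def by (intro continuous_intros)
  from measurable_compose[OF assms borel_measurable_continuous_onI[OF this]] show ?thesis by simp
qed

lemma borel_measurable_proj_act[measurable (raw)]:
  fixes f :: "'a \<Rightarrow> real^'q^'q" and h :: "'a \<Rightarrow> real^'q"
  assumes [measurable]: "f \<in> borel_measurable M" "h \<in> borel_measurable M"
  shows "(\<lambda>x. proj_act (f x) (h x)) \<in> borel_measurable M"
  unfolding proj_act_def by measurable

lemma borel_measurable_xi[measurable (raw)]:
  fixes f :: "'a \<Rightarrow> real^'q^'q" and h :: "'a \<Rightarrow> real^'q"
  assumes [measurable]: "f \<in> borel_measurable M" "h \<in> borel_measurable M"
  shows "(\<lambda>x. xi (f x) (h x)) \<in> borel_measurable M"
  unfolding xi_def by measurable

lemma borel_measurable_Nsum[measurable]: "Nsum \<in> borel_measurable borel"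
  unfolding Nsum_def by measurable

lemma borel_measurable_Vmin[measurable]: "(Vmin :: real^'q^'q \<Rightarrow> real) \<in> borel_measurable borel"
proof -
  have "Vmin = (\<lambda>g::real^'q^'q. Min ((\<lambda>i. \<Sum>j\<in>UNIV. g $ i $ j) ` UNIV))"
    by (simp add: Vmin_def fun_eq_iff)
  also have "\<dots> \<in> borel_measurable borel"
    by (rule borel_measurable_Min) auto
  finally show ?thesis .
qed

lemma S_set_borel[measurable]: "S_set \<in> sets borel"
proof -
  have "S_set = {g\<in>space borel. (\<forall>i j. g $ i $ j \<ge> 0) \<and> (\<forall>i. \<exists>j. g $ i $ j > 0) \<and> (\<forall>j. \<exists>i. g $ i $ j > 0)}"
    unfolding S_set_def by simp
  also have "\<dots> \<in> sets borel" by measurable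
  finally show ?thesis .
qed

lemma Bbar_borel[measurable]: "Bbar \<in> sets borel"
proof -
  have "Bbar = {x\<in>space borel. (\<forall>i. x $ i \<ge> 0) \<and> l1norm x = 1}"
    unfolding Bbar_def by simp
  also have "\<dots> \<in> sets borel" by measurable
  finally show ?thesis .
qed

subsection \<open>Nonnegative matrices acting on supports\<close>

definition supp :: "real^'q \<Rightarrow> 'q set" where
  "supp x = {j. x $ j \<noteq> 0}"

definition img :: "real^'q^'q \<Rightarrow> 'q set \<Rightarrow> 'q set" where
  "img g J = {i. \<exists>j\<in>J. g $ i $ j \<noteq> 0}"

definition colsum :: "real^'q^'q \<Rightarrow> 'q \<Rightarrow> real" where
  "colsum g j = (\<Sum>i\<in>UNIV. g $ i $ j)"

lemma transpose_nth: "transpose g $ i $ j = g $ j $ i"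
  by (simp add: transpose_def)

lemma S_set_nonneg: "g \<in> S_set \<Longrightarrow> 0 \<le> g $ i $ j"
  unfolding S_set_def by auto

lemma S_set_transpose: "g \<in> S_set \<Longrightarrow> transpose g \<in> S_set"
  unfolding S_set_def by (auto simp: transpose_nth)

lemma S_pos_transpose: "transpose g \<in> S_pos \<longleftrightarrow> g \<in> S_pos"
  unfolding S_pos_def by (auto simp: transpose_nth)

lemma Bbar_nonneg: "x \<in> Bbar \<Longrightarrow> 0 \<le> x $ j"
  unfolding Bbar_def by auto

lemma Bbar_sum: "x \<in> Bbar \<Longrightarrow> (\<Sum>j\<in>UNIV. x $ j) = 1"
  unfolding Bbar_def l1norm_def by auto

lemma Bbar_le_one: "x \<in> Bbar \<Longrightarrow> x $ j \<le> 1"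
  using member_le_sum[of j UNIV "\<lambda>j. x $ j"] Bbar_sum[of x] Bbar_nonneg[of x] by auto

lemma Bbar_supp_nonempty: "x \<in> Bbar \<Longrightarrow> supp x \<noteq> {}"
  using Bbar_sum[of x] unfolding supp_def by (metis (mono_tags) empty_Collect_eq sum.neutral zero_neq_one)

lemma supp_matrix_vector_mult:
  assumes g: "\<And>i j. 0 \<le> g $ i $ j" and x: "\<And>j. 0 \<le> x $ j"
  shows "supp (g *v x) = img g (supp x)"
proof -
  have "(\<Sum>j\<in>UNIV. g $ i $ j * x $ j) = 0 \<longleftrightarrow> (\<forall>j\<in>UNIV. g $ i $ j * x $ j = 0)" for i
    using g x by (intro sum_nonneg_eq_0_iff) auto
  then show ?thesis
    unfolding supp_def img_def by (auto simp: matrix_vector_mult_def)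
qed

lemma img_matrix_mult:
  assumes A: "\<And>i j. 0 \<le> A $ i $ j" and B: "\<And>i j. 0 \<le> B $ i $ j"
  shows "img (A ** B) J = img A (img B J)"
proof -
  have "(\<Sum>k\<in>UNIV. A $ i $ k * B $ k $ j) = 0 \<longleftrightarrow> (\<forall>k\<in>UNIV. A $ i $ k * B $ k $ j = 0)" for i j
    using A B by (intro sum_nonneg_eq_0_iff) auto
  then show ?thesis
    unfolding img_def by (auto simp: matrix_matrix_mult_def)
qed

lemma img_mono: "J \<subseteq> K \<Longrightarrow> img g J \<subseteq> img g K"
  unfolding img_def by auto

lemma img_S_set_UNIV: "g \<in> S_set \<Longrightarrow> img g UNIV = UNIV"
  unfolding img_def S_set_def by (auto, metis less_irrefl)

lemma img_S_pos: "g \<in> S_pos \<Longrightarrow> J \<noteq> {} \<Longrightarrow> img g J = UNIV"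
  unfolding img_def S_pos_def by (auto, metis less_irrefl)

lemma lprod_nonneg: "(\<And>k. Y k \<in> S_set) \<Longrightarrow> 0 \<le> lprod Y n $ i $ j"
proof (induction n arbitrary: i j)
  case 0
  then show ?case by (simp add: mat_def)
next
  case (Suc n)
  have "0 \<le> Y n $ i $ k" for k using S_set_nonneg[OF Suc.prems] .
  with Suc show ?case
    by (auto simp: matrix_matrix_mult_def intro!: sum_nonneg)
qed

lemma img_transpose_lprod:
  assumes YS: "\<And>k. Y k \<in> S_set"
    and stable: "\<And>k K. K \<in> D \<Longrightarrow> img (transpose (Y k)) K \<in> D"
    and "K \<in> D"
  shows "img (transpose (lprod Y n)) K \<in> D"
  using \<open>K \<in> D\<close>
proof (induction n arbitrary: K)
  case 0
  then show ?case by (simp add: img_def mat_def transpose_nth)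
next
  case (Suc n)
  have "transpose (lprod Y (Suc n)) = transpose (lprod Y n) ** transpose (Y n)"
    by (simp add: matrix_transpose_mul)
  moreover have "img (transpose (lprod Y n) ** transpose (Y n)) K
      = img (transpose (lprod Y n)) (img (transpose (Y n)) K)"
    using lprod_nonneg[OF YS] S_set_nonneg[OF S_set_transpose[OF YS]]
    by (intro img_matrix_mult) (auto simp: transpose_nth)
  ultimately show ?case using Suc stable by simp
qed

subsection \<open>Two-sided bounds for the cocycle\<close>

lemma l1norm_matrix_vector_mult:
  assumes g: "g \<in> S_set" and x: "x \<in> Bbar"
  shows "l1norm (g *v x) = (\<Sum>j\<in>UNIV. colsum g j * x $ j)"
proof -
  have "l1norm (g *v x) = (\<Sum>i\<in>UNIV. \<Sum>j\<in>UNIV. g $ i $ j * x $ j)"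
    unfolding l1norm_def matrix_vector_mult_def
    using S_set_nonneg[OF g] Bbar_nonneg[OF x] by (intro sum.cong refl) (simp add: sum_nonneg)
  also have "\<dots> = (\<Sum>j\<in>UNIV. colsum g j * x $ j)"
    unfolding colsum_def by (subst sum.swap) (simp add: sum_distrib_right)
  finally show ?thesis .
qed

lemma colsum_pos:
  assumes g: "g \<in> S_set"
  shows "0 < colsum g j"
proof -
  obtain i where "0 < g $ i $ j" using g unfolding S_set_def by blast
  moreover have "g $ i $ j \<le> colsum g j"
    unfolding colsum_def using S_set_nonneg[OF g] by (intro member_le_sum) auto
  ultimately show ?thesis by simp
qed

lemma Nsum_colsum: "Nsum g = (\<Sum>j\<in>UNIV. colsum g j)"
  unfolding Nsum_def colsum_def by (rule sum.swap)

lemma Nsum_transpose: "Nsum (transpose g) = Nsum g"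
  unfolding Nsum_def transpose_nth by (rule sum.swap)

lemma Vmin_transpose: "Vmin (transpose g) = Min (range (colsum g))"
  unfolding Vmin_def colsum_def transpose_nth by simp

lemma l1norm_le_Nsum:
  assumes g: "g \<in> S_set" and x: "x \<in> Bbar"
  shows "l1norm (g *v x) \<le> Nsum g"
  unfolding l1norm_matrix_vector_mult[OF g x] Nsum_colsum
  using colsum_pos[OF g] Bbar_le_one[OF x] by (intro sum_mono) (simp add: mult_left_le less_imp_le)

lemma Vmin_transpose_le_l1norm:
  assumes g: "g \<in> S_set" and x: "x \<in> Bbar"
  shows "Vmin (transpose g) \<le> l1norm (g *v x)"
proof -
  have "Vmin (transpose g) = (\<Sum>j\<in>UNIV. Vmin (transpose g) * x $ j)"
    using Bbar_sum[OF x] by (simp add: sum_distrib_left[symmetric])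
  also have "\<dots> \<le> (\<Sum>j\<in>UNIV. colsum g j * x $ j)"
    using Bbar_nonneg[OF x] unfolding Vmin_transpose by (intro sum_mono mult_right_mono) auto
  finally show ?thesis unfolding l1norm_matrix_vector_mult[OF g x] .
qed

lemma Nsum_le_l1norm:
  assumes g: "g \<in> S_set" and x: "x \<in> Bbar" and e: "\<And>j. e \<le> x $ j"
  shows "e * Nsum g \<le> l1norm (g *v x)"
  unfolding l1norm_matrix_vector_mult[OF g x] Nsum_colsum sum_distrib_left
  using colsum_pos[OF g] e by (intro sum_mono) (simp add: mult.commute mult_left_mono less_imp_le)

lemma l1norm_pos:
  assumes g: "g \<in> S_set" and x: "x \<in> Bbar"
  shows "0 < l1norm (g *v x)"
proof -
  have "0 < Vmin (transpose g)"
    unfolding Vmin_transpose using colsum_pos[OF g] by (subst Min_gr_iff) auto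
  then show ?thesis using Vmin_transpose_le_l1norm[OF g x] by linarith
qed

lemma xi_le_iff:
  assumes g: "g \<in> S_set" and x: "x \<in> Bbar"
  shows "xi g x \<le> u \<longleftrightarrow> l1norm (g *v x) \<le> exp u"
  unfolding xi_def using l1norm_pos[OF g x] by (metis exp_le_cancel_iff exp_ln)

lemma l1norm_scaleR: "l1norm (c *\<^sub>R y) = \<bar>c\<bar> * l1norm y"
  unfolding l1norm_def by (simp add: abs_mult sum_distrib_left)

lemma proj_act_Bbar:
  assumes g: "g \<in> S_set" and x: "x \<in> Bbar"
  shows "proj_act g x \<in> Bbar" "supp (proj_act g x) = img g (supp x)"
proof -
  have p: "0 < l1norm (g *v x)" by (rule l1norm_pos[OF g x])
  have nonneg: "0 \<le> (g *v x) $ i" for i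
    unfolding matrix_vector_mult_def
    using S_set_nonneg[OF g] Bbar_nonneg[OF x] by (auto intro!: sum_nonneg)
  show "proj_act g x \<in> Bbar"
    unfolding Bbar_def proj_act_def using p nonneg by (auto simp: l1norm_scaleR)
  show "supp (proj_act g x) = img g (supp x)"
    unfolding proj_act_def using p supp_matrix_vector_mult[OF S_set_nonneg[OF g] Bbar_nonneg[OF x]]
    by (simp add: supp_def)
qed

text \<open>The indicator of a closed set is a pointwise limit of continuous functions with values
  in \<open>[0,1]\<close>; this lets invariance, which is only assumed for continuous test functions,
  be applied to closed sets.\<close>

lemma closed_indicator_approx:
  fixes C :: "'a::metric_space set"
  assumes "closed C"
  obtains f :: "nat \<Rightarrow> 'a \<Rightarrow> real"
  where "\<And>k. continuous_on UNIV (f k)" "\<And>k y. 0 \<le> f k y" "\<And>k y. f k y \<le> 1"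
    "\<And>y. (\<lambda>k. f k y) \<longlonglongrightarrow> indicator C y"
proof (cases "C = {}")
  case True
  show ?thesis by (rule that[of "\<lambda>_ _. 0"]) (auto simp: True)
next
  case False
  define f where "f k y = max 0 (1 - real (Suc k) * infdist y C)" for k y
  have lim: "(\<lambda>k. f k y) \<longlonglongrightarrow> indicator C y" for y
  proof (cases "y \<in> C")
    case True
    then show ?thesis by (simp add: f_def)
  next
    case out: False
    then have d: "0 < infdist y C" using infdist_pos_not_in_closed assms False by blast
    obtain N :: nat where N: "1 / infdist y C < N" using reals_Archimedean2 by blast
    have "f k y = 0" if "N \<le> k" for k
    proof -
      have "1 / infdist y C < real (Suc k)" using N that by linarith
      then show ?thesis using d by (simp add: f_def field_simps)
    qed
    then have "eventually (\<lambda>k. f k y = 0) sequentially" by (auto simp: eventually_sequentially)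
    then show ?thesis using out by (simp add: tendsto_eventually)
  qed
  show ?thesis
  proof (rule that[of f])
    show "continuous_on UNIV (f k)" for k
      unfolding f_def by (intro continuous_intros)
  qed (use lim in \<open>auto simp: f_def infdist_nonneg\<close>)
qed

lemma (in prob_space) integral_tendsto_indicator:
  assumes \<phi>[measurable]: "\<phi> \<in> borel_measurable M" and C[measurable]: "C \<in> sets borel"
    and f[measurable]: "\<And>k. f k \<in> borel_measurable borel"
    and bound: "\<And>k y. \<bar>f k y\<bar> \<le> 1" and lim: "\<And>y. (\<lambda>k. f k y) \<longlonglongrightarrow> indicator C y"
  shows "(\<lambda>k. \<integral>y. f k (\<phi> y) \<partial>M) \<longlonglongrightarrow> prob {y\<in>space M. \<phi> y \<in> C}"
proof -
  have "(\<lambda>k. \<integral>y. f k (\<phi> y) \<partial>M) \<longlonglongrightarrow> (\<integral>y. indicator C (\<phi> y) \<partial>M)"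
    by (rule integral_dominated_convergence[where w="\<lambda>_. 1"]) (use bound lim in auto)
  also have "(\<integral>y. indicator C (\<phi> y) \<partial>M) = (\<integral>y. indicator {y\<in>space M. \<phi> y \<in> C} y \<partial>M)"
    by (rule Bochner_Integration.integral_cong) (auto simp: indicator_def)
  finally show ?thesis by simp
qed

lemma (in prob_space) AE_one_of_integral_eq_prob:
  assumes C[measurable]: "C \<in> events" and h[measurable]: "h \<in> borel_measurable M"
    and h01: "\<And>x. 0 \<le> h x" "\<And>x. h x \<le> 1"
    and off: "AE x in M. x \<notin> C \<longrightarrow> h x = 0" and int: "(\<integral>x. h x \<partial>M) = prob C"
  shows "AE x in M. x \<in> C \<longrightarrow> h x = 1"
proof -
  have int_h: "integrable M h"
    by (rule integrable_const_bound[where B=1]) (use h01 in auto)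
  have int_C: "integrable M (indicator C :: _ \<Rightarrow> real)"
    by (rule integrable_const_bound[where B=1]) auto
  have "(\<integral>x. indicator C x * (1 - h x) \<partial>M) = (\<integral>x. indicator C x - h x \<partial>M)"
    by (rule integral_cong_AE) (use off in \<open>auto simp: indicator_def\<close>)
  also have "\<dots> = 0"
    using int int_h int_C by (simp add: integral_diff)
  finally have "AE x in M. indicator C x * (1 - h x) = (0::real)"
    using h01 by (subst integral_nonneg_eq_0_iff_AE[symmetric])
      (auto intro!: integrable_const_bound[where B=1] simp: indicator_def)
  then show ?thesis by eventually_elim (auto simp: indicator_def)
qed

lemma (in prob_space) AE_witness:
  assumes "AE x in M. P x" "0 < prob E"
  shows "\<exists>x\<in>E. P x"
proof (rule ccontr)
  assume none: "\<not> (\<exists>x\<in>E. P x)"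
  from assms(1) obtain N where N: "{x\<in>space M. \<not> P x} \<subseteq> N" "N \<in> null_sets M"
    by (rule AE_E) auto
  have E: "E \<in> events" using assms(2) measure_notin_sets by fastforce
  then have "E \<subseteq> N" using N none sets.sets_into_space by blast
  then have "prob E = 0" using E N(2) measure_eq_0_null_sets null_sets_subset by blast
  with assms(2) show False by simp
qed

lemma (in prob_space) prob_zero_of_AE_notin:
  assumes "AE x in M. x \<notin> A"
  shows "prob A = 0"
proof (cases "A \<in> events")
  case True
  then show ?thesis using prob_eq_0 assms by blast
qed (rule measure_notin_sets)

lemma supp_level_set_borel[measurable]: "{x\<in>Bbar. supp x = J} \<in> sets borel"
proof -
  have "{x\<in>Bbar. supp x = J} = {x\<in>space borel. x \<in> Bbar \<and> (\<forall>j. (x $ j \<noteq> 0) = (j \<in> J))}"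
    unfolding supp_def by auto
  also have "\<dots> \<in> sets borel" by measurable
  finally show ?thesis .
qed

lemma measurable_img[measurable]: "(\<lambda>g::real^'q^'q. img g J) \<in> borel \<rightarrow>\<^sub>M count_space UNIV"
proof (subst measurable_count_space_eq2_countable, safe)
  fix K
  have "(\<lambda>g::real^'q^'q. img g J) -` {K} \<inter> space borel
      = {g\<in>space borel. \<forall>i. (i \<in> K) = (\<exists>j\<in>J. g $ i $ j \<noteq> 0)}"
    unfolding img_def by auto
  also have "\<dots> \<in> sets borel" by measurable
  finally show "(\<lambda>g::real^'q^'q. img g J) -` {K} \<inter> space borel \<in> sets borel" .
qed auto

text \<open>For a family \<open>D\<close> of supports closed under taking subsets, the vectors with support in
  \<open>D\<close> form a closed set: a finite union of coordinate subspaces.\<close>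

lemma closed_supp_family:
  assumes down: "\<And>K K'. K \<subseteq> K' \<Longrightarrow> K' \<in> D \<Longrightarrow> K \<in> D"
  shows "closed {x::real^'q. supp x \<in> D}"
proof -
  have "{x::real^'q. supp x \<in> D} = (\<Union>J\<in>D. {x. supp x \<subseteq> J})"
    using down by auto
  also have "\<dots> = (\<Union>J\<in>D. \<Inter>j\<in>-J. {x. x $ j = 0})"
    unfolding supp_def by auto
  finally have eq: "{x::real^'q. supp x \<in> D} = (\<Union>J\<in>D. \<Inter>j\<in>-J. {x. x $ j = 0})" .
  have "closed {x::real^'q. x $ j = 0}" for j
    by (rule closed_Collect_eq) (intro continuous_intros)+
  then show ?thesis unfolding eq by (auto intro!: closed_UN closed_INT)
qed

locale matrix_pair =
  mu: prob_space \<mu> + nu: prob_space \<nu>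
  for \<mu> :: "(real^'q^'q) measure" and \<nu> :: "(real^'q) measure" +
  assumes sets_mu[measurable_cong]: "sets \<mu> = sets borel"
    and sets_nu[measurable_cong]: "sets \<nu> = sets borel"
    and mu_S_set: "measure \<mu> S_set = 1"
    and nu_Bbar: "measure \<nu> Bbar = 1"
begin

lemma space_mu[simp]: "space \<mu> = UNIV"
  using sets_eq_imp_space_eq[OF sets_mu] by simp

lemma space_nu[simp]: "space \<nu> = UNIV"
  using sets_eq_imp_space_eq[OF sets_nu] by simp

lemma AE_mu_S_set: "AE g in \<mu>. g \<in> S_set"
  by (rule mu.AE_prob_1[OF mu_S_set])

lemma AE_nu_Bbar: "AE x in \<nu>. x \<in> Bbar"
  by (rule nu.AE_prob_1[OF nu_Bbar])

text \<open>Almost every \<open>x\<close> has full support or a support charged by \<open>\<nu>\<close>, since there are only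
  finitely many supports.\<close>

lemma AE_charged_support:
  "AE x in \<nu>. x \<in> Bbar \<and> (supp x = UNIV \<or> 0 < measure \<nu> {y\<in>Bbar. supp y = supp x})"
proof -
  have "AE x in \<nu>. \<forall>J. measure \<nu> {y\<in>Bbar. supp y = J} = 0 \<longrightarrow> supp x \<noteq> J"
  proof (subst AE_all_countable, intro allI)
    fix J :: "'q set"
    show "AE x in \<nu>. measure \<nu> {y\<in>Bbar. supp y = J} = 0 \<longrightarrow> supp x \<noteq> J"
    proof (cases "measure \<nu> {y\<in>Bbar. supp y = J} = 0")
      case True
      then have "AE x in \<nu>. x \<notin> {y\<in>Bbar. supp y = J}"
        by (subst nu.prob_eq_0[symmetric]) (auto simp: sets_nu)
      with AE_nu_Bbar show ?thesis by eventually_elim auto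
    qed simp
  qed
  with AE_nu_Bbar show ?thesis
    by eventually_elim (auto simp: less_le)
qed

end

locale invariant_matrix_pair = matrix_pair \<mu> \<nu>
  for \<mu> :: "(real^'q^'q) measure" and \<nu> :: "(real^'q) measure" +
  assumes invariant: "mu_invariant \<mu> \<nu>"
begin

lemma invariance_closed:
  fixes C :: "(real^'q) set"
  assumes "closed C"
  shows "(\<lambda>x. measure \<mu> {g. proj_act g x \<in> C}) \<in> borel_measurable \<nu>"
    and "measure \<nu> C = (\<integral>x. measure \<mu> {g. proj_act g x \<in> C} \<partial>\<nu>)"
proof -
  have C[measurable]: "C \<in> sets borel" using assms by (simp add: borel_closed)
  obtain f :: "nat \<Rightarrow> real^'q \<Rightarrow> real" where f_cont: "\<And>k. continuous_on UNIV (f k)"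
    and f01: "\<And>k y. 0 \<le> f k y" "\<And>k y. f k y \<le> 1" and f_lim: "\<And>y. (\<lambda>k. f k y) \<longlonglongrightarrow> indicator C y"
    using closed_indicator_approx[OF assms] by blast
  have f_meas[measurable]: "f k \<in> borel_measurable borel" for k
    by (rule borel_measurable_continuous_onI[OF f_cont])
  have f_abs: "\<bar>f k y\<bar> \<le> 1" for k y using f01[of k y] by simp
  define h where "h x = measure \<mu> {g. proj_act g x \<in> C}" for x
  define G where "G k x = (\<integral>g. f k (proj_act g x) \<partial>\<mu>)" for k x
  have G_meas: "G k \<in> borel_measurable \<nu>" for k
  proof -
    have "(\<lambda>(x, g). f k (proj_act g x)) \<in> borel_measurable (\<nu> \<Otimes>\<^sub>M \<mu>)" by measurable
    then show ?thesis unfolding G_def by (rule mu.borel_measurable_lebesgue_integral)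
  qed
  have G_lim: "(\<lambda>k. G k x) \<longlonglongrightarrow> h x" for x
    unfolding G_def h_def using mu.integral_tendsto_indicator[OF _ C f_meas f_abs f_lim] by simp
  have h_meas: "h \<in> borel_measurable \<nu>"
    by (rule borel_measurable_LIMSEQ_real[OF G_lim G_meas])
  have G_abs: "\<bar>G k x\<bar> \<le> 1" for k x
  proof -
    have "\<bar>G k x\<bar> \<le> (\<integral>g. \<bar>f k (proj_act g x)\<bar> \<partial>\<mu>)"
      unfolding G_def using integral_norm_bound[of \<mu> "\<lambda>g. f k (proj_act g x)"] by simp
    also have "\<dots> \<le> (\<integral>g. 1 \<partial>\<mu>)"
      using f_abs by (intro integral_mono mu.integrable_const_bound[where B=1]) auto
    finally show ?thesis using mu.prob_space by simp
  qed
  have "(\<lambda>k. \<integral>x. G k x \<partial>\<nu>) \<longlonglongrightarrow> (\<integral>x. h x \<partial>\<nu>)"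
    by (rule integral_dominated_convergence[where w="\<lambda>_. 1"])
      (simp_all add: h_meas G_meas G_lim G_abs)
  moreover have "(\<integral>x. G k x \<partial>\<nu>) = (\<integral>x. f k x \<partial>\<nu>)" for k
  proof -
    have "bounded (range (f k))" unfolding bounded_iff using f_abs by auto
    with f_cont show ?thesis
      using invariant unfolding mu_invariant_def G_def by blast
  qed
  ultimately have "(\<lambda>k. \<integral>x. f k x \<partial>\<nu>) \<longlonglongrightarrow> (\<integral>x. h x \<partial>\<nu>)" by simp
  moreover have "(\<lambda>k. \<integral>x. f k x \<partial>\<nu>) \<longlonglongrightarrow> measure \<nu> C"
    using nu.integral_tendsto_indicator[OF _ C f_meas f_abs f_lim, of "\<lambda>x. x"] by simp
  ultimately have "measure \<nu> C = (\<integral>x. h x \<partial>\<nu>)" by (rule LIMSEQ_unique[rotated])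
  with h_meas show "(\<lambda>x. measure \<mu> {g. proj_act g x \<in> C}) \<in> borel_measurable \<nu>"
    and "measure \<nu> C = (\<integral>x. measure \<mu> {g. proj_act g x \<in> C} \<partial>\<nu>)"
    unfolding h_def by auto
qed

text \<open>Since \<open>S\<close> maps full-support vectors to
  full-support vectors, invariance forces \<open>\<mu>\<close>-almost every \<open>g\<close> to map the support of
  \<open>\<nu>\<close>-almost every vector with support in \<open>D\<close> back into \<open>D\<close>.\<close>

lemma stable_support_family:
  fixes D :: "'q set set"
  assumes down: "\<And>K K'. K \<subseteq> K' \<Longrightarrow> K' \<in> D \<Longrightarrow> K \<in> D" and proper: "UNIV \<notin> D"
    and dichotomy: "AE x in \<nu>. supp x \<in> D \<or> supp x = UNIV"
  shows "AE x in \<nu>. supp x \<in> D \<longrightarrow> (AE g in \<mu>. img g (supp x) \<in> D)"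
proof -
  define C where "C = {x::real^'q. supp x \<in> D}"
  have closed: "closed C" unfolding C_def by (rule closed_supp_family[OF down])
  then have [measurable]: "C \<in> sets borel" by (simp add: borel_closed)
  have C_nu: "C \<in> sets \<nu>" by measurable
  have act_sets: "{g. proj_act g x \<in> C} \<in> sets \<mu>" for x
  proof -
    have "{g\<in>space \<mu>. proj_act g x \<in> C} \<in> sets \<mu>" by measurable
    then show ?thesis by simp
  qed
  define h where "h x = measure \<mu> {g. proj_act g x \<in> C}" for x
  have act_C: "proj_act g x \<in> C \<longleftrightarrow> img g (supp x) \<in> D" if "g \<in> S_set" "x \<in> Bbar" for g x
    using proj_act_Bbar[OF that] unfolding C_def by simp
  have "AE x in \<nu>. x \<notin> C \<longrightarrow> h x = 0"
    using dichotomy AE_nu_Bbar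
  proof eventually_elim
    case (elim x)
    then have x: "x \<in> Bbar" by simp
    show ?case
    proof
      assume "x \<notin> C"
      then have full: "supp x = UNIV" using elim unfolding C_def by auto
      have "AE g in \<mu>. g \<notin> {g. proj_act g x \<in> C}"
        using AE_mu_S_set
      proof eventually_elim
        case (elim g)
        then show ?case using act_C[OF elim x] img_S_set_UNIV[OF elim] full proper by simp
      qed
      then show "h x = 0" unfolding h_def using mu.prob_eq_0[OF act_sets] by blast
    qed
  qed
  then have "AE x in \<nu>. x \<in> C \<longrightarrow> h x = 1"
    using invariance_closed[OF closed] unfolding h_def[symmetric]
    by (intro nu.AE_one_of_integral_eq_prob[OF C_nu]) (simp_all add: h_def)
  with AE_nu_Bbar show ?thesis
  proof eventually_elim
    case (elim x)
    then have x: "x \<in> Bbar" and hx: "x \<in> C \<Longrightarrow> h x = 1" by auto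
    show ?case
    proof
      assume "supp x \<in> D"
      then have "h x = 1" using hx by (simp add: C_def)
      then have "measure \<mu> {g. proj_act g x \<in> C} = 1" by (simp only: h_def)
      then have "AE g in \<mu>. g \<in> {g. proj_act g x \<in> C}" by (rule mu.AE_prob_1)
      with AE_mu_S_set show "AE g in \<mu>. img g (supp x) \<in> D"
      proof eventually_elim
        case (elim g)
        then show ?case using act_C[OF elim(1) x] by simp
      qed
    qed
  qed
qed

end

subsection \<open>The invariant law is carried by vectors of full support\<close>

lemma lprod_positive_null:
  fixes X :: "nat \<Rightarrow> 'w \<Rightarrow> real^'q^'q" and D :: "'q set set"
  assumes "prob_space M"
    and inS: "\<And>n \<omega>. \<omega> \<in> space M \<Longrightarrow> X n \<omega> \<in> S_set"
    and proper: "UNIV \<notin> D" and J: "J \<in> D" "J \<noteq> {}"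
    and stable: "AE \<omega> in M. \<forall>k. \<forall>K\<in>D. img (transpose (X k \<omega>)) K \<in> D"
  shows "measure M {\<omega>\<in>space M. \<exists>n\<ge>1. lprod (\<lambda>k. X k \<omega>) n \<in> S_pos} = 0"
proof -
  interpret prob_space M by fact
  have "AE \<omega> in M. \<omega> \<notin> {\<omega>\<in>space M. \<exists>n\<ge>1. lprod (\<lambda>k. X k \<omega>) n \<in> S_pos}"
    using stable AE_space
  proof eventually_elim
    case (elim \<omega>)
    have "img (transpose (lprod (\<lambda>k. X k \<omega>) n)) J \<in> D" for n
      by (rule img_transpose_lprod) (use elim inS J in auto)
    then have "lprod (\<lambda>k. X k \<omega>) n \<notin> S_pos" for n
      using img_S_pos[OF _ J(2)] S_pos_transpose proper by metis
    then show ?case by auto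
  qed
  then show ?thesis by (rule prob_zero_of_AE_notin)
qed

lemma distr_transpose_ident:
  fixes X :: "nat \<Rightarrow> 'w \<Rightarrow> real^'q^'q"
  assumes [measurable]: "\<And>n. X n \<in> borel_measurable M"
    and ident: "\<And>n. distr M borel (X n) = distr M borel (X 0)"
  shows "distr M borel (\<lambda>\<omega>. transpose (X k \<omega>)) = distr M borel (\<lambda>\<omega>. transpose (X 0 \<omega>))"
proof -
  have "distr M borel (\<lambda>\<omega>. transpose (X n \<omega>)) = distr (distr M borel (X n)) borel transpose" for n
    by (subst distr_distr) (auto simp: comp_def)
  then show ?thesis using ident[of k] by simp
qed

text \<open>Otherwise the proper supports charged by \<open>\<nu>\<close>
  generate a family that is almost surely stable under all factors.\<close>

lemma nu_full_support:
  fixes M :: "'w measure" and X :: "nat \<Rightarrow> 'w \<Rightarrow> real^'q^'q" and \<nu> :: "(real^'q) measure"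
  assumes M: "prob_space M" and X[measurable]: "\<And>n. X n \<in> borel_measurable M"
    and ident: "\<And>n. distr M borel (X n) = distr M borel (X 0)"
    and inS: "\<And>n \<omega>. \<omega> \<in> space M \<Longrightarrow> X n \<omega> \<in> S_set"
    and pos: "measure M {\<omega>\<in>space M. \<exists>n\<ge>1. lprod (\<lambda>k. X k \<omega>) n \<in> S_pos} > 0"
    and pair: "invariant_matrix_pair (distr M borel (\<lambda>\<omega>. transpose (X 0 \<omega>))) \<nu>"
  shows "measure \<nu> {x\<in>Bbar. supp x = UNIV} = 1"
proof -
  define \<mu> where "\<mu> = distr M borel (\<lambda>\<omega>. transpose (X 0 \<omega>))"
  interpret invariant_matrix_pair \<mu> \<nu> using pair unfolding \<mu>_def .
  define A where "A = {J. J \<noteq> UNIV \<and> 0 < measure \<nu> {x\<in>Bbar. supp x = J}}"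
  define D where "D = {K. \<exists>J\<in>A. K \<subseteq> J}"
  have charged: "AE x in \<nu>. x \<in> Bbar \<and> (supp x = UNIV \<or> supp x \<in> A)"
    using AE_charged_support by eventually_elim (auto simp: A_def)
  show ?thesis
  proof (cases "A = {}")
    case True
    have "AE x in \<nu>. x \<in> {x\<in>Bbar. supp x = UNIV}"
      using charged by eventually_elim (use True in auto)
    then show ?thesis by (subst nu.prob_eq_1) (auto simp: sets_nu)
  next
    case False
    then obtain J0 where J0: "J0 \<in> A" by blast
    have down: "\<And>K K'. K \<subseteq> K' \<Longrightarrow> K' \<in> D \<Longrightarrow> K \<in> D"
      unfolding D_def by (blast intro: order_trans)
    have proper: "UNIV \<notin> D" and A_D: "A \<subseteq> D"
      unfolding D_def A_def by (auto simp: top_unique)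
    have "AE x in \<nu>. supp x \<in> D \<or> supp x = UNIV"
      using charged by eventually_elim (use A_D in auto)
    with down proper have nu_stable: "AE x in \<nu>. supp x \<in> D \<longrightarrow> (AE g in \<mu>. img g (supp x) \<in> D)"
      by (rule stable_support_family)
    then have mu_stable: "AE g in \<mu>. img g K \<in> D" if "K \<in> D" for K
    proof -
      obtain J where J: "J \<in> A" "K \<subseteq> J" using \<open>K \<in> D\<close> unfolding D_def by blast
      then have "\<exists>x\<in>{x\<in>Bbar. supp x = J}. supp x \<in> D \<longrightarrow> (AE g in \<mu>. img g (supp x) \<in> D)"
        by (intro nu.AE_witness[OF nu_stable]) (simp add: A_def)
      then have "AE g in \<mu>. img g J \<in> D" using J A_D by auto
      then show ?thesis
        by eventually_elim (use img_mono[OF J(2)] down in blast)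
    qed
    have "AE \<omega> in M. \<forall>k. \<forall>K\<in>D. img (transpose (X k \<omega>)) K \<in> D"
    proof (subst AE_all_countable, intro allI)
      fix k
      have law: "\<mu> = distr M borel (\<lambda>\<omega>. transpose (X k \<omega>))"
        unfolding \<mu>_def by (rule distr_transpose_ident[of X, OF X ident, symmetric])
      have "AE g in \<mu>. \<forall>K\<in>D. img g K \<in> D"
        using mu_stable by (subst eventually_ball_finite) auto
      moreover have "{g\<in>space borel. \<forall>K\<in>D. img g K \<in> D} \<in> sets borel" by measurable
      ultimately show "AE \<omega> in M. \<forall>K\<in>D. img (transpose (X k \<omega>)) K \<in> D"
        unfolding law by (subst (asm) AE_distr_iff) auto
    qed
    moreover have "J0 \<noteq> {}"
    proof -
      have "\<exists>x\<in>{x\<in>Bbar. supp x = J0}. True"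
        using J0 unfolding A_def by (intro nu.AE_witness) auto
      then show ?thesis using Bbar_supp_nonempty by blast
    qed
    ultimately have "measure M {\<omega>\<in>space M. \<exists>n\<ge>1. lprod (\<lambda>k. X k \<omega>) n \<in> S_pos} = 0"
      using lprod_positive_null[where X=X and D=D and J=J0, OF M inS proper] J0 A_D by blast
    with pos show ?thesis by simp
  qed
qed

subsection \<open>Regularly varying tails\<close>

lemma tendsto_squeeze_families:
  fixes G :: "'a \<Rightarrow> 'b::linorder_topology"
  assumes lower: "\<And>n. \<forall>\<^sub>F x in F. l n x \<le> G x" "\<And>n. (l n \<longlongrightarrow> p n) F" "p \<longlonglongrightarrow> c"
    and upper: "\<And>n. \<forall>\<^sub>F x in F. G x \<le> r n x" "\<And>n. (r n \<longlongrightarrow> q n) F" "q \<longlonglongrightarrow> c"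
  shows "(G \<longlongrightarrow> c) F"
proof (rule order_tendstoI)
  fix a assume "a < c"
  from order_tendstoD(1)[OF lower(3) this] obtain n where "a < p n"
    by (auto simp: eventually_sequentially)
  from order_tendstoD(1)[OF lower(2) this] lower(1)[of n]
  show "\<forall>\<^sub>F x in F. a < G x" by eventually_elim (rule less_le_trans)
next
  fix a assume "c < a"
  from order_tendstoD(2)[OF upper(3) this] obtain n where "q n < a"
    by (auto simp: eventually_sequentially)
  from order_tendstoD(2)[OF upper(2) this] upper(1)[of n]
  show "\<forall>\<^sub>F x in F. G x < a" by eventually_elim (rule le_less_trans)
qed

lemma slowly_varying_weight_nonneg:
  assumes "slowly_varying L"
  shows "\<forall>\<^sub>F u in at_top. 0 \<le> u powr \<alpha> / L u"
proof -
  have "\<forall>\<^sub>F u in at_top. 0 < L u" using assms unfolding slowly_varying_def by blast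
  then show ?thesis by eventually_elim simp
qed

lemma regvar_scale:
  fixes L a :: "real \<Rightarrow> real"
  assumes sv: "slowly_varying L" and t: "0 < t"
    and lim: "((\<lambda>u. u powr \<alpha> / L u * a u) \<longlongrightarrow> c) at_top"
  shows "((\<lambda>u. u powr \<alpha> / L u * a (t * u)) \<longlongrightarrow> t powr (- \<alpha>) * c) at_top"
proof -
  have L_ratio: "((\<lambda>u. L (t * u) / L u) \<longlongrightarrow> 1) at_top"
    using sv t unfolding slowly_varying_def by blast
  have L_pos: "\<forall>\<^sub>F u in at_top. 0 < L u" using sv unfolding slowly_varying_def by blast
  have tu: "filterlim (\<lambda>u. t * u) at_top at_top"
    by (rule filterlim_tendsto_pos_mult_at_top[OF tendsto_const t filterlim_ident])
  have lim_t: "((\<lambda>u. (t * u) powr \<alpha> / L (t * u) * a (t * u)) \<longlongrightarrow> c) at_top"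
    using filterlim_compose[OF lim tu] by (simp add: comp_def)
  have L_pos_t: "\<forall>\<^sub>F u in at_top. 0 < L (t * u)"
    using filterlim_iff[THEN iffD1, OF tu, rule_format, OF L_pos] .
  have "((\<lambda>u. (t powr (- \<alpha>) * (L (t * u) / L u)) * ((t * u) powr \<alpha> / L (t * u) * a (t * u)))
      \<longlongrightarrow> (t powr (- \<alpha>) * 1) * c) at_top"
    by (intro tendsto_mult tendsto_const L_ratio lim_t)
  moreover have "\<forall>\<^sub>F u in at_top. (t powr (- \<alpha>) * (L (t * u) / L u)) * ((t * u) powr \<alpha> / L (t * u) * a (t * u))
      = u powr \<alpha> / L u * a (t * u)"
    using L_pos L_pos_t eventually_gt_at_top[of 0]
  proof eventually_elim
    case (elim u)
    have "(t * u) powr \<alpha> = t powr \<alpha> * u powr \<alpha>" using t elim by (simp add: powr_mult)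
    moreover have "t powr (- \<alpha>) * t powr \<alpha> = 1" using t by (simp add: powr_minus)
    ultimately show ?case using elim by (simp add: field_simps)
  qed
  ultimately show ?thesis by (simp add: tendsto_cong)
qed

lemma eventually_le_linear:
  assumes "0 < d"
  shows "\<forall>\<^sub>F u in at_top. s \<le> d * (u::real)"
  using filterlim_tendsto_pos_mult_at_top[OF tendsto_const assms filterlim_ident]
  by (simp add: filterlim_at_top)

text \<open>A nonincreasing tail that is regularly varying is insensitive to a bounded shift of its
  argument: it is squeezed between its values at \<open>(1 \<plusminus> \<epsilon>) u\<close>.\<close>

lemma regvar_translate:
  fixes L a :: "real \<Rightarrow> real"
  assumes sv: "slowly_varying L" and anti: "\<And>x y. x \<le> y \<Longrightarrow> a y \<le> a x"
    and lim: "((\<lambda>u. u powr \<alpha> / L u * a u) \<longlongrightarrow> c) at_top"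
  shows "((\<lambda>u. u powr \<alpha> / L u * a (u + s)) \<longlongrightarrow> c) at_top"
proof -
  define w where "w u = u powr \<alpha> / L u" for u
  define up where "up n = 1 + inverse (real (Suc n))" for n
  define lo where "lo n = 1 - inverse (real (Suc (Suc n)))" for n
  have up_gt: "1 < up n" and lo_pos: "0 < lo n" and lo_lt: "lo n < 1" for n
    unfolding up_def lo_def by (auto simp: field_simps)
  have inv_lim: "(\<lambda>n. inverse (real (Suc (Suc n)))) \<longlonglongrightarrow> 0"
    using LIMSEQ_inverse_real_of_nat by (rule LIMSEQ_Suc)
  have "up \<longlonglongrightarrow> 1 + 0" "lo \<longlonglongrightarrow> 1 - 0"
    unfolding up_def lo_def by (intro tendsto_intros LIMSEQ_inverse_real_of_nat inv_lim)+
  then have "(\<lambda>n. up n powr (- \<alpha>) * c) \<longlonglongrightarrow> 1 powr (- \<alpha>) * c"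
    "(\<lambda>n. lo n powr (- \<alpha>) * c) \<longlonglongrightarrow> 1 powr (- \<alpha>) * c"
    by (intro tendsto_mult tendsto_powr tendsto_const; simp)+
  then have lims: "(\<lambda>n. up n powr (- \<alpha>) * c) \<longlonglongrightarrow> c" "(\<lambda>n. lo n powr (- \<alpha>) * c) \<longlonglongrightarrow> c"
    by simp_all
  have w_nonneg: "\<forall>\<^sub>F u in at_top. 0 \<le> w u"
    unfolding w_def by (rule slowly_varying_weight_nonneg[OF sv])
  show ?thesis
    unfolding w_def[symmetric]
  proof (rule tendsto_squeeze_families[OF _ _ lims(1) _ _ lims(2)])
    show "((\<lambda>u. w u * a (up n * u)) \<longlongrightarrow> up n powr (- \<alpha>) * c) at_top" for n
      unfolding w_def using regvar_scale[OF sv _ lim] up_gt[of n] by simp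
    show "((\<lambda>u. w u * a (lo n * u)) \<longlongrightarrow> lo n powr (- \<alpha>) * c) at_top" for n
      unfolding w_def using regvar_scale[OF sv lo_pos lim] .
    show "\<forall>\<^sub>F u in at_top. w u * a (up n * u) \<le> w u * a (u + s)" for n
    proof -
      have "0 < up n - 1" using up_gt[of n] by simp
      from w_nonneg eventually_le_linear[OF this, of s] show ?thesis
        by eventually_elim (auto intro!: mult_left_mono anti simp: algebra_simps)
    qed
    show "\<forall>\<^sub>F u in at_top. w u * a (u + s) \<le> w u * a (lo n * u)" for n
    proof -
      have "0 < 1 - lo n" using lo_lt[of n] by simp
      from w_nonneg eventually_le_linear[OF this, of "- s"] show ?thesis
        by eventually_elim (auto intro!: mult_left_mono anti simp: algebra_simps)
    qed
  qed
qed

subsection \<open>Bounds for the distribution function of the cocycle\<close>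

definition Bbar_ge :: "real \<Rightarrow> (real^'q) set" where
  "Bbar_ge e = {x\<in>Bbar. \<forall>j. e \<le> x $ j}"

lemma Bbar_ge_borel[measurable]: "Bbar_ge e \<in> sets borel"
proof -
  have "Bbar_ge e = {x\<in>space borel. x \<in> Bbar \<and> (\<forall>j. e \<le> x $ j)}"
    unfolding Bbar_ge_def by auto
  also have "\<dots> \<in> sets borel" by measurable
  finally show ?thesis .
qed

sublocale matrix_pair \<subseteq> pair: pair_prob_space \<mu> \<nu> by unfold_locales

lemma tail_sets_borel:
  "{g::real^'q^'q. c < Nsum g} \<in> sets borel" "{g::real^'q^'q. Nsum g \<le> c} \<in> sets borel"
  "{g::real^'q^'q. Vmin (transpose g) \<le> c} \<in> sets borel"
proof -
  have "{g\<in>space borel. c < Nsum g} \<in> sets borel" "{g\<in>space borel. Nsum g \<le> c} \<in> sets borel"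
    "{g\<in>space borel. Vmin (transpose g) \<le> c} \<in> sets borel"
    by measurable
  then show "{g::real^'q^'q. c < Nsum g} \<in> sets borel" "{g::real^'q^'q. Nsum g \<le> c} \<in> sets borel"
    "{g::real^'q^'q. Vmin (transpose g) \<le> c} \<in> sets borel"
    by simp_all
qed

context matrix_pair
begin

definition xi_cdf :: "real \<Rightarrow> real" where
  "xi_cdf u = measure (\<mu> \<Otimes>\<^sub>M \<nu>) {(g, x). g \<in> S_set \<and> x \<in> Bbar \<and> xi g x \<le> u}"

definition upper_tail :: "real \<Rightarrow> real" where
  "upper_tail u = measure \<mu> {g. exp u < Nsum g}"

definition lower_tail :: "real \<Rightarrow> real" where
  "lower_tail u = measure \<mu> {g. Nsum g \<le> exp (- u)}"

definition vmin_tail :: "real \<Rightarrow> real" where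
  "vmin_tail u = measure \<mu> {g. Vmin (transpose g) \<le> exp (- u)}"

lemma sets_pair_borel: "sets (\<mu> \<Otimes>\<^sub>M \<nu>) = sets borel"
  using sets_pair_measure_cong[OF sets_mu sets_nu] by (simp only: borel_prod)

lemma Times_sets:
  assumes "A \<in> sets borel" "B \<in> sets borel"
  shows "A \<times> B \<in> sets (\<mu> \<Otimes>\<^sub>M \<nu>)"
  using assms unfolding sets_pair_borel borel_prod[symmetric] by simp

lemma measure_Times:
  assumes "A \<in> sets borel" "B \<in> sets borel"
  shows "measure (\<mu> \<Otimes>\<^sub>M \<nu>) (A \<times> B) = measure \<mu> A * measure \<nu> B"
proof -
  have "emeasure (\<mu> \<Otimes>\<^sub>M \<nu>) (A \<times> B) = emeasure \<mu> A * emeasure \<nu> B"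
    using assms by (intro nu.emeasure_pair_measure_Times) (auto simp: sets_mu sets_nu)
  then show ?thesis by (simp add: measure_def enn2real_mult)
qed

lemma measure_Int_S_set:
  assumes "A \<in> sets borel"
  shows "measure \<mu> (A \<inter> S_set) = measure \<mu> A"
proof -
  have "measure \<mu> (A - S_set) \<le> measure \<mu> (UNIV - S_set)"
    using assms by (intro mu.finite_measure_mono) (auto simp: sets_mu)
  also have "\<dots> = 0"
    using mu.prob_compl[of S_set] mu_S_set by (simp add: sets_mu)
  finally have "measure \<mu> (A - S_set) = 0" by (simp add: antisym)
  then show ?thesis
    using mu.finite_measure_Diff'[of A S_set] assms by (simp add: sets_mu Diff_Diff_Int Int_commute)
qed

lemma sublevel_sets: "{(g, x). g \<in> S_set \<and> x \<in> Bbar \<and> xi g x \<le> u} \<in> sets (\<mu> \<Otimes>\<^sub>M \<nu>)"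
proof -
  have "{(g, x). g \<in> S_set \<and> x \<in> Bbar \<and> xi g x \<le> u}
      = {p\<in>space (borel \<Otimes>\<^sub>M borel). fst p \<in> S_set \<and> snd p \<in> Bbar \<and> xi (fst p) (snd p) \<le> u}"
    by (auto simp: space_pair_measure)
  also have "\<dots> \<in> sets (borel \<Otimes>\<^sub>M borel)" by measurable
  finally show ?thesis unfolding sets_pair_borel by (simp only: borel_prod)
qed

lemma one_minus_xi_cdf:
  "1 - xi_cdf u = measure (\<mu> \<Otimes>\<^sub>M \<nu>) (S_set \<times> Bbar - {(g, x). g \<in> S_set \<and> x \<in> Bbar \<and> xi g x \<le> u})"
proof -
  have "measure (\<mu> \<Otimes>\<^sub>M \<nu>) (S_set \<times> Bbar) = 1"
    using measure_Times mu_S_set nu_Bbar by simp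
  moreover have "S_set \<times> Bbar \<in> sets (\<mu> \<Otimes>\<^sub>M \<nu>)" by (rule Times_sets) simp_all
  ultimately show ?thesis unfolding xi_cdf_def
    by (subst pair.finite_measure_Diff) (auto simp: sublevel_sets)
qed

text \<open>Upper tail: \<open>|g x| \<le> N(g)\<close>, and \<open>|g x| \<ge> e N(g)\<close> when all coordinates of \<open>x\<close> are at
  least \<open>e\<close>.\<close>

lemma one_minus_xi_cdf_le: "1 - xi_cdf u \<le> upper_tail u"
proof -
  have "S_set \<times> Bbar - {(g, x). g \<in> S_set \<and> x \<in> Bbar \<and> xi g x \<le> u} \<subseteq> {g. exp u < Nsum g} \<times> UNIV"
    using xi_le_iff l1norm_le_Nsum by fastforce
  moreover note tail_sets_borel(1)[of "exp u"]
  ultimately have "1 - xi_cdf u \<le> measure (\<mu> \<Otimes>\<^sub>M \<nu>) ({g. exp u < Nsum g} \<times> UNIV)"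
    unfolding one_minus_xi_cdf
    by (intro pair.finite_measure_mono) (auto simp: sets_pair_borel borel_prod[symmetric])
  also have "\<dots> = upper_tail u"
    using measure_Times[of _ UNIV] \<open>_ \<in> sets borel\<close> unfolding upper_tail_def by (simp add: nu.prob_space[simplified])
  finally show ?thesis .
qed


lemma one_minus_xi_cdf_ge:
  assumes e: "0 < e"
  shows "upper_tail (u - ln e) * measure \<nu> (Bbar_ge e) \<le> 1 - xi_cdf u"
proof -
  let ?A = "{g. exp (u - ln e) < Nsum g} \<inter> S_set"
  have "?A \<times> (Bbar_ge e :: (real^'q) set) \<subseteq> S_set \<times> Bbar - {(g, x). g \<in> S_set \<and> x \<in> Bbar \<and> xi g x \<le> u}"
  proof
    fix p :: "(real^'q^'q) \<times> (real^'q)" assume "p \<in> ?A \<times> Bbar_ge e"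
    then obtain g x where p: "p = (g, x)" and N: "exp (u - ln e) < Nsum g" and g: "g \<in> S_set"
      and x: "x \<in> Bbar_ge e" by auto
    then have xB: "x \<in> Bbar" and xe: "\<And>j. e \<le> x $ j" unfolding Bbar_ge_def by auto
    have "exp u < e * Nsum g" using N e by (simp add: exp_diff field_simps)
    also have "\<dots> \<le> l1norm (g *v x)" by (rule Nsum_le_l1norm[OF g xB xe])
    finally have "\<not> xi g x \<le> u" using xi_le_iff[OF g xB] by simp
    with p g xB show "p \<in> S_set \<times> Bbar - {(g, x). g \<in> S_set \<and> x \<in> Bbar \<and> xi g x \<le> u}"
      by simp
  qed
  then have "measure (\<mu> \<Otimes>\<^sub>M \<nu>) (?A \<times> Bbar_ge e) \<le> 1 - xi_cdf u"
    unfolding one_minus_xi_cdf using tail_sets_borel(1)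
    by (intro pair.finite_measure_mono) (auto intro!: Times_sets simp: sublevel_sets)
  moreover have "measure (\<mu> \<Otimes>\<^sub>M \<nu>) (?A \<times> Bbar_ge e) = upper_tail (u - ln e) * measure \<nu> (Bbar_ge e)"
    using tail_sets_borel(1) unfolding upper_tail_def
    by (simp add: measure_Times measure_Int_S_set)
  ultimately show ?thesis by simp
qed

text \<open>Lower tail: \<open>|g x| \<le> N(g)\<close>; and \<open>|g x| \<ge> V(g\<^sup>T)\<close>, while \<open>|g x| \<ge> e N(g)\<close> when all
  coordinates of \<open>x\<close> are at least \<open>e\<close>.\<close>

lemma xi_cdf_ge: "lower_tail u \<le> xi_cdf (- u)"
proof -
  let ?A = "{g. Nsum g \<le> exp (- u)} \<inter> S_set"
  have "?A \<times> Bbar \<subseteq> {(g, x). g \<in> S_set \<and> x \<in> Bbar \<and> xi g x \<le> - u}"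
    using xi_le_iff l1norm_le_Nsum by fastforce
  then have "measure (\<mu> \<Otimes>\<^sub>M \<nu>) (?A \<times> Bbar) \<le> xi_cdf (- u)"
    unfolding xi_cdf_def using tail_sets_borel(2)
    by (intro pair.finite_measure_mono) (auto intro!: Times_sets simp: sublevel_sets)
  moreover have "measure (\<mu> \<Otimes>\<^sub>M \<nu>) (?A \<times> Bbar) = lower_tail u"
    using tail_sets_borel(2) unfolding lower_tail_def
    by (simp add: measure_Times measure_Int_S_set nu_Bbar)
  ultimately show ?thesis by simp
qed

lemma xi_cdf_le:
  assumes e: "0 < e"
  shows "xi_cdf (- u) \<le> lower_tail (u + ln e) + vmin_tail u * (1 - measure \<nu> (Bbar_ge e))"
proof -
  let ?N = "{g. Nsum g \<le> exp (- (u + ln e))} \<times> (UNIV :: (real^'q) set)"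
  let ?V = "{g. Vmin (transpose g) \<le> exp (- u)} \<times> (Bbar - Bbar_ge e)"
  have "{(g, x). g \<in> S_set \<and> x \<in> Bbar \<and> xi g x \<le> - u} \<subseteq> ?N \<union> ?V"
  proof
    fix p :: "(real^'q^'q) \<times> (real^'q)" assume "p \<in> {(g, x). g \<in> S_set \<and> x \<in> Bbar \<and> xi g x \<le> - u}"
    then obtain g x where p: "p = (g, x)" and g: "g \<in> S_set" and x: "x \<in> Bbar"
      and le: "xi g x \<le> - u" by auto
    then have gx: "l1norm (g *v x) \<le> exp (- u)" using xi_le_iff by blast
    show "p \<in> ?N \<union> ?V"
    proof (cases "x \<in> Bbar_ge e")
      case True
      then have "e * Nsum g \<le> exp (- u)"
        using Nsum_le_l1norm[OF g x] gx unfolding Bbar_ge_def by fastforce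
      moreover have "exp (- (u + ln e)) = exp (- u) / e"
        using e by (simp add: exp_diff)
      ultimately have "Nsum g \<le> exp (- (u + ln e))"
        using e by (simp add: pos_le_divide_eq mult.commute)
      then show ?thesis using p by simp
    next
      case False
      then show ?thesis using p x Vmin_transpose_le_l1norm[OF g x] gx by simp
    qed
  qed
  then have "xi_cdf (- u) \<le> measure (\<mu> \<Otimes>\<^sub>M \<nu>) (?N \<union> ?V)"
    unfolding xi_cdf_def using tail_sets_borel
    by (intro pair.finite_measure_mono) (auto intro!: Times_sets)
  also have "\<dots> \<le> measure (\<mu> \<Otimes>\<^sub>M \<nu>) ?N + measure (\<mu> \<Otimes>\<^sub>M \<nu>) ?V"
    using tail_sets_borel by (intro measure_Un_le) (auto intro!: Times_sets)
  also have "\<dots> = lower_tail (u + ln e) + vmin_tail u * (1 - measure \<nu> (Bbar_ge e))"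
  proof -
    have "measure \<nu> (Bbar - Bbar_ge e) = 1 - measure \<nu> (Bbar_ge e)"
      using nu.finite_measure_Diff[of Bbar "Bbar_ge e"] nu_Bbar
      by (auto simp: sets_nu Bbar_ge_def)
    then show ?thesis
      using tail_sets_borel nu.prob_space unfolding lower_tail_def vmin_tail_def
      by (simp add: measure_Times minus_add_distrib)
  qed
  finally show ?thesis .
qed

lemma upper_tail_antimono:
  assumes "s \<le> t" shows "upper_tail t \<le> upper_tail s"
proof -
  have "exp s \<le> exp t" using assms by simp
  then have "{g. exp t < Nsum g} \<subseteq> {g. exp s < Nsum g}" by (auto, linarith)
  then show ?thesis unfolding upper_tail_def using tail_sets_borel(1)
    by (intro mu.finite_measure_mono) (auto simp: sets_mu)
qed

lemma lower_tail_antimono: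
  assumes "s \<le> t" shows "lower_tail t \<le> lower_tail s"
proof -
  have "exp (- t) \<le> exp (- s)" using assms by simp
  then have "{g. Nsum g \<le> exp (- t)} \<subseteq> {g. Nsum g \<le> exp (- s)}" by (auto, linarith)
  then show ?thesis unfolding lower_tail_def using tail_sets_borel(2)
    by (intro mu.finite_measure_mono) (auto simp: sets_mu)
qed

lemma Bbar_ge_exhausts:
  assumes full: "measure \<nu> {x\<in>Bbar. supp x = UNIV} = 1"
  shows "(\<lambda>n. measure \<nu> (Bbar_ge (inverse (real (Suc n))))) \<longlonglongrightarrow> 1"
proof -
  let ?B = "\<lambda>n. Bbar_ge (inverse (real (Suc n))) :: (real^'q) set"
  have inc: "incseq ?B"
  proof (rule incseq_SucI)
    fix n
    have "inverse (real (Suc (Suc n))) \<le> inverse (real (Suc n))" by (simp add: field_simps)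
    then show "?B n \<subseteq> ?B (Suc n)" unfolding Bbar_ge_def by (blast intro: order_trans)
  qed
  have "(\<Union>n. ?B n) = {x\<in>Bbar. supp x = UNIV}"
  proof safe
    fix x n j assume "x \<in> ?B n"
    then have "inverse (real (Suc n)) \<le> x $ j" unfolding Bbar_ge_def by blast
    moreover have "0 < inverse (real (Suc n))" by simp
    ultimately have "x $ j \<noteq> 0" by linarith
    then show "j \<in> supp x" unfolding supp_def by simp
  next
    fix x :: "real^'q" assume x: "x \<in> Bbar" and s: "supp x = UNIV"
    have pos: "0 < x $ j" for j
    proof -
      have "x $ j \<noteq> 0" using s unfolding supp_def by blast
      with Bbar_nonneg[OF x, of j] show ?thesis by simp
    qed
    define m where "m = Min (range (\<lambda>j. x $ j))"
    have "0 < m" unfolding m_def using pos by (subst Min_gr_iff) auto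
    then obtain n where "inverse (real (Suc n)) < m" using reals_Archimedean by blast
    moreover have "m \<le> x $ j" for j unfolding m_def by (rule Min_le) auto
    ultimately have "\<forall>j. inverse (real (Suc n)) \<le> x $ j" by (meson less_le_trans less_imp_le)
    then show "x \<in> (\<Union>n. ?B n)" using x unfolding Bbar_ge_def by blast
  qed (auto simp: Bbar_ge_def)
  moreover have "range ?B \<subseteq> sets \<nu>" by (auto simp: sets_nu)
  ultimately show ?thesis
    using nu.finite_Lim_measure_incseq[OF _ inc] full by simp
qed

end

context matrix_pair
begin

text \<open>Upper tail: \<open>1 - F(u)\<close> lies between \<open>\<nu>(Bbar_ge e) \<cdot> P[N > exp (u - ln e)]\<close> and
  \<open>P[N > exp u]\<close>; the shift by \<open>ln e\<close> is invisible at scale \<open>u\<^sup>\<alpha>/L(u)\<close>, and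
  \<open>\<nu>(Bbar_ge e) \<rightarrow> 1\<close> as \<open>e \<rightarrow> 0\<close>.\<close>

lemma xi_upper_tail_limit:
  assumes sv: "slowly_varying L" and full: "measure \<nu> {x\<in>Bbar. supp x = UNIV} = 1"
    and lim: "((\<lambda>u. u powr \<alpha> / L u * upper_tail u) \<longlongrightarrow> c) at_top"
  shows "((\<lambda>u. u powr \<alpha> / L u * (1 - xi_cdf u)) \<longlongrightarrow> c) at_top"
proof -
  define w where "w u = u powr \<alpha> / L u" for u
  define e where "e n = inverse (real (Suc n))" for n
  define \<beta> where "\<beta> n = measure \<nu> (Bbar_ge (e n))" for n
  have e_pos: "0 < e n" for n unfolding e_def by simp
  have w_nonneg: "\<forall>\<^sub>F u in at_top. 0 \<le> w u"
    unfolding w_def by (rule slowly_varying_weight_nonneg[OF sv])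
  have \<beta>_lim: "(\<lambda>n. \<beta> n * c) \<longlonglongrightarrow> 1 * c"
    unfolding \<beta>_def e_def by (intro tendsto_mult tendsto_const Bbar_ge_exhausts[OF full])
  show ?thesis
    unfolding w_def[symmetric]
  proof (rule tendsto_squeeze_families[OF _ _ \<beta>_lim[simplified] _ _ tendsto_const])
    show "((\<lambda>u. \<beta> n * (w u * upper_tail (u + - ln (e n)))) \<longlongrightarrow> \<beta> n * c) at_top" for n
      unfolding w_def using regvar_translate[OF sv upper_tail_antimono lim]
      by (intro tendsto_mult tendsto_const)
    show "((\<lambda>u. w u * upper_tail u) \<longlongrightarrow> c) at_top" using lim unfolding w_def .
    show "\<forall>\<^sub>F u in at_top. \<beta> n * (w u * upper_tail (u + - ln (e n))) \<le> w u * (1 - xi_cdf u)" for n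
      using w_nonneg
    proof eventually_elim
      case (elim u)
      have "\<beta> n * (w u * upper_tail (u + - ln (e n))) = w u * (upper_tail (u - ln (e n)) * \<beta> n)"
        by simp
      also have "\<dots> \<le> w u * (1 - xi_cdf u)"
        using one_minus_xi_cdf_ge[OF e_pos] elim unfolding \<beta>_def by (rule mult_left_mono)
      finally show ?case .
    qed
    show "\<forall>\<^sub>F u in at_top. w u * (1 - xi_cdf u) \<le> w u * upper_tail u"
      using w_nonneg by eventually_elim (rule mult_left_mono[OF one_minus_xi_cdf_le])
  qed
qed

text \<open>Lower tail: \<open>F(-u)\<close> lies between \<open>P[N \<le> exp (-u)]\<close> and
  \<open>P[N \<le> exp (-u - ln e)] + (1 - \<nu>(Bbar_ge e)) \<cdot> P[V \<le> exp (-u)]\<close>; the last term is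
  negligible because the tail of \<open>V\<close> is at most of the same order.\<close>

lemma xi_lower_tail_limit:
  assumes sv: "slowly_varying L" and full: "measure \<nu> {x\<in>Bbar. supp x = UNIV} = 1"
    and lim: "((\<lambda>u. u powr \<alpha> / L u * lower_tail u) \<longlongrightarrow> c) at_top"
    and bound: "\<forall>\<^sub>F u in at_top. u powr \<alpha> / L u * vmin_tail u \<le> K"
  shows "((\<lambda>u. u powr \<alpha> / L u * xi_cdf (- u)) \<longlongrightarrow> c) at_top"
proof -
  define w where "w u = u powr \<alpha> / L u" for u
  define e where "e n = inverse (real (Suc n))" for n
  define \<beta> where "\<beta> n = measure \<nu> (Bbar_ge (e n))" for n
  have e_pos: "0 < e n" for n unfolding e_def by simp
  have w_nonneg: "\<forall>\<^sub>F u in at_top. 0 \<le> w u"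
    unfolding w_def by (rule slowly_varying_weight_nonneg[OF sv])
  have \<beta>_le: "\<beta> n \<le> 1" for n unfolding \<beta>_def by simp
  have err_lim: "(\<lambda>n. c + K * (1 - \<beta> n)) \<longlonglongrightarrow> c + K * (1 - 1)"
    unfolding \<beta>_def e_def by (intro tendsto_intros Bbar_ge_exhausts[OF full])
  show ?thesis
    unfolding w_def[symmetric]
  proof (rule tendsto_squeeze_families[OF _ _ tendsto_const _ _ err_lim[simplified]])
    show "((\<lambda>u. w u * lower_tail u) \<longlongrightarrow> c) at_top" using lim unfolding w_def .
    show "((\<lambda>u. w u * lower_tail (u + ln (e n)) + K * (1 - \<beta> n)) \<longlongrightarrow> c + K * (1 - \<beta> n)) at_top"
      for n
      unfolding w_def using regvar_translate[OF sv lower_tail_antimono lim]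
      by (intro tendsto_add tendsto_const)
    show "\<forall>\<^sub>F u in at_top. w u * lower_tail u \<le> w u * xi_cdf (- u)"
      using w_nonneg by eventually_elim (rule mult_left_mono[OF xi_cdf_ge])
    show "\<forall>\<^sub>F u in at_top. w u * xi_cdf (- u) \<le> w u * lower_tail (u + ln (e n)) + K * (1 - \<beta> n)"
      for n
      using w_nonneg bound unfolding w_def[symmetric]
    proof eventually_elim
      case (elim u)
      have "w u * xi_cdf (- u) \<le> w u * (lower_tail (u + ln (e n)) + vmin_tail u * (1 - \<beta> n))"
        using xi_cdf_le[OF e_pos] elim(1) unfolding \<beta>_def by (rule mult_left_mono)
      also have "\<dots> = w u * lower_tail (u + ln (e n)) + (w u * vmin_tail u) * (1 - \<beta> n)"
        by (simp add: algebra_simps)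
      also have "\<dots> \<le> w u * lower_tail (u + ln (e n)) + K * (1 - \<beta> n)"
        using elim(2) \<beta>_le[of n] by (intro add_left_mono mult_right_mono) auto
      finally show ?case .
    qed
  qed
qed

end

lemma Limsup_finite_bound:
  fixes f :: "'a \<Rightarrow> real"
  assumes "Limsup F (\<lambda>x. ereal (f x)) < \<infinity>"
  obtains K where "\<forall>\<^sub>F x in F. f x \<le> K"
proof -
  obtain K where "Limsup F (\<lambda>x. ereal (f x)) < ereal K"
  proof (cases "Limsup F (\<lambda>x. ereal (f x))")
    case (real r)
    then show ?thesis using that[of "r + 1"] by simp
  qed (use assms that[of 0] in auto)
  from Limsup_lessD[OF this] have "\<forall>\<^sub>F x in F. f x \<le> K"
    by eventually_elim simp
  then show ?thesis by (rule that)
qed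

lemma invariant_matrix_pair_law:
  fixes M :: "'w measure" and X :: "nat \<Rightarrow> 'w \<Rightarrow> real^'q^'q" and \<nu> :: "(real^'q) measure"
  assumes "prob_space M" and [measurable]: "X 0 \<in> borel_measurable M"
    and inS: "\<And>\<omega>. \<omega> \<in> space M \<Longrightarrow> X 0 \<omega> \<in> S_set"
    and "prob_space \<nu>" "sets \<nu> = sets borel" and nu_B: "emeasure \<nu> Bbar = 1"
    and "mu_invariant (distr M borel (\<lambda>\<omega>. transpose (X 0 \<omega>))) \<nu>"
  shows "invariant_matrix_pair (distr M borel (\<lambda>\<omega>. transpose (X 0 \<omega>))) \<nu>"
proof (intro invariant_matrix_pair.intro matrix_pair.intro matrix_pair_axioms.intro
    invariant_matrix_pair_axioms.intro)
  interpret M: prob_space M by fact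
  show "prob_space (distr M borel (\<lambda>\<omega>. transpose (X 0 \<omega>)))"
    by (rule M.prob_space_distr) measurable
  have "{\<omega>\<in>space M. transpose (X 0 \<omega>) \<in> S_set} = space M"
    using inS S_set_transpose by auto
  then show "measure (distr M borel (\<lambda>\<omega>. transpose (X 0 \<omega>))) S_set = 1"
    by (subst measure_distr) (simp_all add: vimage_def Int_def conj_commute M.prob_space)
  show "measure \<nu> Bbar = 1" using nu_B by (simp add: measure_def)
qed (use assms in simp_all)

theorem mainTheorem9:
  fixes M :: "'w measure" and X :: "nat \<Rightarrow> 'w \<Rightarrow> real^'q^'q"
    and \<nu> :: "(real^'q) measure" and L :: "real \<Rightarrow> real"
    and \<alpha> c_plus c_minus :: real
  assumes P: "prob_space M"
    and indep: "prob_space.indep_vars M (\<lambda>_. borel) X UNIV"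
    and ident: "\<And>n. distr M borel (X n) = distr M borel (X 0)"
    and inS: "\<And>n \<omega>. \<omega> \<in> space M \<Longrightarrow> X n \<omega> \<in> S_set"
    and pos: "measure M {\<omega>\<in>space M. \<exists>n\<ge>1. lprod (\<lambda>k. X k \<omega>) n \<in> S_pos} > 0"
    and nu_prob: "prob_space \<nu>" and nu_sets: "sets \<nu> = sets borel"
    and nu_B: "emeasure \<nu> Bbar = 1"
    and nu_inv: "mu_invariant (distr M borel (\<lambda>\<omega>. transpose (X 0 \<omega>))) \<nu>"
    and alpha: "0 < \<alpha>" "\<alpha> \<le> 2"
    and L_sv: "slowly_varying L"
    and L_unb: "\<alpha> = 2 \<Longrightarrow> \<not> (\<exists>B. \<forall>\<^sub>F u in at_top. L u \<le> B)"
    and c: "c_plus \<ge> 0" "c_minus \<ge> 0" "c_plus + c_minus > 0"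
    and tail_plus: "((\<lambda>u. u powr \<alpha> / L u * measure M {\<omega>\<in>space M. Nsum (X 0 \<omega>) > exp u})
                      \<longlongrightarrow> c_plus) at_top"
    and tail_minus: "((\<lambda>u. u powr \<alpha> / L u * measure M {\<omega>\<in>space M. Nsum (X 0 \<omega>) \<le> exp (- u)})
                      \<longlongrightarrow> c_minus) at_top"
    and tail_V: "Limsup at_top (\<lambda>u. ereal (u powr \<alpha> / L u * measure M {\<omega>\<in>space M. Vmin (X 0 \<omega>) \<le> exp (- u)}))
                   < \<infinity>"
  shows "let \<mu> = distr M borel (\<lambda>\<omega>. transpose (X 0 \<omega>));
             F = (\<lambda>u. measure (\<mu> \<Otimes>\<^sub>M \<nu>) {(g, x). g \<in> S_set \<and> x \<in> Bbar \<and> xi g x \<le> u})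
         in ((\<lambda>u. u powr \<alpha> / L u * (1 - F u)) \<longlongrightarrow> c_plus) at_top
          \<and> ((\<lambda>u. u powr \<alpha> / L u * F (- u)) \<longlongrightarrow> c_minus) at_top"
proof -
  interpret M: prob_space M by fact
  have X[measurable]: "X k \<in> borel_measurable M" for k
    using indep unfolding M.indep_vars_def by auto
  define \<mu> where "\<mu> = distr M borel (\<lambda>\<omega>. transpose (X 0 \<omega>))"
  have pair: "invariant_matrix_pair \<mu> \<nu>"
    unfolding \<mu>_def using P X inS nu_prob nu_sets nu_B nu_inv by (rule invariant_matrix_pair_law)
  interpret invariant_matrix_pair \<mu> \<nu> by (fact pair)
  have full: "measure \<nu> {x\<in>Bbar. supp x = UNIV} = 1"
    using nu_full_support[OF P X ident inS pos] pair unfolding \<mu>_def by blast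
  have law: "measure \<mu> A = measure M {\<omega>\<in>space M. transpose (X 0 \<omega>) \<in> A}" if "A \<in> sets borel" for A
    unfolding \<mu>_def using that by (subst measure_distr) (auto simp: vimage_def Int_def conj_commute)
  have tails: "upper_tail u = measure M {\<omega>\<in>space M. Nsum (X 0 \<omega>) > exp u}"
    "lower_tail u = measure M {\<omega>\<in>space M. Nsum (X 0 \<omega>) \<le> exp (- u)}"
    "vmin_tail u = measure M {\<omega>\<in>space M. Vmin (X 0 \<omega>) \<le> exp (- u)}" for u
    unfolding upper_tail_def lower_tail_def vmin_tail_def
    by (simp_all add: law tail_sets_borel Nsum_transpose)
  obtain K where "\<forall>\<^sub>F u in at_top. u powr \<alpha> / L u * vmin_tail u \<le> K"
    using tail_V unfolding tails by (rule Limsup_finite_bound)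
  then show ?thesis
    using xi_upper_tail_limit[OF L_sv full] xi_lower_tail_limit[OF L_sv full] tail_plus tail_minus
    unfolding Let_def \<mu>_def[symmetric] xi_cdf_def tails by blast
qed

end
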